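(* A real symmetric $3\times 3$ matrix $A$ has symmetric Kapranov rank two if and only if it has symmetric tropical rank two.
   Context: Let $\tilde K$ be the field of Hahn series $\sum_{\alpha\in A}c_\alpha t^\alpha$ ($A\subset\mathbb R$ well-ordered, $c_\alpha\in\mathbb C$); for nonzero $a\in\tilde K$, $\deg(a)$ is the smallest exponent with nonzero coefficient. A symmetric lift of a real symmetric matrix $A$ is a symmetric matrix $\tilde A$ over $\tilde K$ with all entries nonzero and $\deg(\tilde a_{i,j})=A_{i,j}$; the symmetric Kapranov rank of $A$ is the minimum rank of a symmetric lift. For an $r\times r$ submatrix of $A$ with row index set $I$ and column index set $J$, each bijection $\rho:I\to J$ gives a monomial $\prod_{i\in I}X_{i,\rho(i)}$ in commuting variables subject to $X_{i,j}=X_{j,i}$, with value $\sum_{i\in I}A_{i,\rho(i)}$; the submatrix is symmetrically tropically singular if the minimum value is attained by at least two distinct monomials. The symmetric tropical rank of $A$ is the largest $r$ such that $A$ has an $r\times r$ submatrix that is not symmetrically tropically singular. *)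

theory Defs
  imports Complex_Main "HOL-Library.Multiset"
begin

definition well_ordered_real :: "real set \<Rightarrow> bool" where
  "well_ordered_real S \<longleftrightarrow> (\<forall>T. T \<subseteq> S \<and> T \<noteq> {} \<longrightarrow> (\<exists>m\<in>T. \<forall>t\<in>T. m \<le> t))"

typedef hahn = "{f :: real \<Rightarrow> complex. well_ordered_real {a. f a \<noteq> 0}}"
  by (rule exI[of _ "\<lambda>_. 0"]) (simp add: well_ordered_real_def)

definition hzero :: hahn where
  "hzero = Abs_hahn (\<lambda>_. 0)"

definition hadd :: "hahn \<Rightarrow> hahn \<Rightarrow> hahn" where
  "hadd f g = Abs_hahn (\<lambda>a. Rep_hahn f a + Rep_hahn g a)"

text \<open>Cauchy product; the sum is finite since both supports are well-ordered.\<close>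
definition hmul :: "hahn \<Rightarrow> hahn \<Rightarrow> hahn" where
  "hmul f g = Abs_hahn (\<lambda>c. \<Sum>a\<in>{a. Rep_hahn f a \<noteq> 0 \<and> Rep_hahn g (c - a) \<noteq> 0}.
                              Rep_hahn f a * Rep_hahn g (c - a))"

text \<open>Degree: smallest exponent with nonzero coefficient (meaningful for nonzero series).\<close>
definition hdeg :: "hahn \<Rightarrow> real" where
  "hdeg f = (LEAST a. Rep_hahn f a \<noteq> 0)"

definition hsum :: "nat \<Rightarrow> (nat \<Rightarrow> hahn) \<Rightarrow> hahn" where
  "hsum r h = foldr hadd (map h [0..<r]) hzero"

text \<open>Matrices are functions on indices 0..n-1. Rank is the least r such that
  the matrix factors as an (n x r) times (r x n) product.\<close>
definition hrank_le :: "nat \<Rightarrow> (nat \<Rightarrow> nat \<Rightarrow> hahn) \<Rightarrow> nat \<Rightarrow> bool" where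
  "hrank_le n M r \<longleftrightarrow> (\<exists>B C :: nat \<Rightarrow> nat \<Rightarrow> hahn.
      \<forall>i<n. \<forall>j<n. M i j = hsum r (\<lambda>k. hmul (B i k) (C k j)))"

definition hrank :: "nat \<Rightarrow> (nat \<Rightarrow> nat \<Rightarrow> hahn) \<Rightarrow> nat" where
  "hrank n M = (LEAST r. hrank_le n M r)"

definition sym_lift :: "nat \<Rightarrow> (nat \<Rightarrow> nat \<Rightarrow> real) \<Rightarrow> (nat \<Rightarrow> nat \<Rightarrow> hahn) \<Rightarrow> bool" where
  "sym_lift n A M \<longleftrightarrow> (\<forall>i<n. \<forall>j<n. M i j = M j i \<and> M i j \<noteq> hzero \<and> hdeg (M i j) = A i j)"

definition sym_kapranov_rank :: "nat \<Rightarrow> (nat \<Rightarrow> nat \<Rightarrow> real) \<Rightarrow> nat" where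
  "sym_kapranov_rank n A = (LEAST r. \<exists>M. sym_lift n A M \<and> hrank n M = r)"

text \<open>Monomial of a bijection rho: I -> J, as a multiset of unordered index pairs
  (encoding X_{i,j} = X_{j,i}), and its value.\<close>
definition sym_monomial :: "nat set \<Rightarrow> (nat \<Rightarrow> nat) \<Rightarrow> nat set multiset" where
  "sym_monomial I \<rho> = image_mset (\<lambda>i. {i, \<rho> i}) (mset_set I)"

definition trop_value :: "(nat \<Rightarrow> nat \<Rightarrow> real) \<Rightarrow> nat set \<Rightarrow> (nat \<Rightarrow> nat) \<Rightarrow> real" where
  "trop_value A I \<rho> = (\<Sum>i\<in>I. A i (\<rho> i))"

definition sym_trop_singular :: "(nat \<Rightarrow> nat \<Rightarrow> real) \<Rightarrow> nat set \<Rightarrow> nat set \<Rightarrow> bool" where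
  "sym_trop_singular A I J \<longleftrightarrow>
     (\<exists>\<rho>1 \<rho>2. bij_betw \<rho>1 I J \<and> bij_betw \<rho>2 I J \<and>
        sym_monomial I \<rho>1 \<noteq> sym_monomial I \<rho>2 \<and>
        trop_value A I \<rho>1 = trop_value A I \<rho>2 \<and>
        (\<forall>\<rho>. bij_betw \<rho> I J \<longrightarrow> trop_value A I \<rho>1 \<le> trop_value A I \<rho>))"

definition sym_trop_rank :: "nat \<Rightarrow> (nat \<Rightarrow> nat \<Rightarrow> real) \<Rightarrow> nat" where
  "sym_trop_rank n A = (GREATEST r. \<exists>I J. I \<subseteq> {..<n} \<and> J \<subseteq> {..<n} \<and>
       card I = r \<and> card J = r \<and> \<not> sym_trop_singular A I J)"

end

theory Submission
  imports Defs "HOL-Combinatorics.Transposition"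
begin

(* A symmetric lift M of rank at most two has vanishing determinant. For a symmetric 3 x 3
  matrix the determinant has five distinct monomials, and their degrees are the values of the
  tropical monomials of A; if the minimum were attained only once, the lowest term could not
  cancel. So the 3 x 3 minor is symmetrically tropically singular. Conversely, after subtracting
  (A_ii + A_jj)/2 the diagonal is zero, and a tie between the tropical monomials leaves, up to
  permuting indices, three shapes of matrix; each has an explicit lift p q^T + q p^T with p, q
  sums of a few monomials, and such a lift has rank at most two.
  A lift of rank one has entries b_i c_j, so degrees are additive and every 2 x 2 minor is
  tropically singular; conversely, singular principal 2 x 2 minors force A_ij = (A_ii + A_jj)/2,
  and then t^(A_ii/2) t^(A_jj/2) is a lift. So symmetric Kapranov rank two, i.e. at most two but not
  at most one, means a singular 3 x 3 minor together with a nonsingular 2 x 2 minor, which is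
  symmetric tropical rank two. *)

section \<open>Well-ordered sets of reals\<close>

lemma well_ordered_real_subset: "well_ordered_real S \<Longrightarrow> T \<subseteq> S \<Longrightarrow> well_ordered_real T"
  unfolding well_ordered_real_def by blast

lemma well_ordered_real_finite: "finite S \<Longrightarrow> well_ordered_real S"
  unfolding well_ordered_real_def by (metis Min_in Min_le finite_subset)

lemma well_ordered_real_Un:
  assumes S: "well_ordered_real S" and T: "well_ordered_real T"
  shows "well_ordered_real (S \<union> T)"
  unfolding well_ordered_real_def
proof (intro allI impI)
  fix U assume U: "U \<subseteq> S \<union> T \<and> U \<noteq> {}"
  show "\<exists>m\<in>U. \<forall>t\<in>U. m \<le> t"
  proof (cases "U \<inter> S = {} \<or> U \<inter> T = {}")
    case True
    then have "U \<subseteq> S \<or> U \<subseteq> T" using U by blast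
    then show ?thesis using S T U unfolding well_ordered_real_def by blast
  next
    case False
    then obtain m1 m2 where m: "m1 \<in> U \<inter> S" "\<forall>t\<in>U \<inter> S. m1 \<le> t" "m2 \<in> U \<inter> T" "\<forall>t\<in>U \<inter> T. m2 \<le> t"
      using S T unfolding well_ordered_real_def by (meson inf_le2)
    show ?thesis
    proof (intro bexI[of _ "min m1 m2"] ballI)
      fix t assume "t \<in> U"
      then show "min m1 m2 \<le> t" using U m by (auto simp: min_le_iff_disj)
    qed (use m in \<open>auto simp: min_def\<close>)
  qed
qed

lemma well_ordered_real_incseq_subseq:
  fixes f :: "nat \<Rightarrow> real"
  assumes S: "well_ordered_real S" and f: "\<And>n. f n \<in> S"
  obtains r where "strict_mono r" "incseq (f \<circ> r)"
proof -
  obtain r where r: "strict_mono r" "monoseq (f \<circ> r)"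
    using seq_monosub[of f] by (auto simp: o_def)
  show ?thesis
  proof (cases "incseq (f \<circ> r)")
    case True
    then show ?thesis using r(1) that by blast
  next
    case False
    then have dec: "decseq (f \<circ> r)" using r(2) by (simp add: monoseq_iff)
    \<comment> \<open>a non-increasing sequence in a well-ordered set is eventually constant\<close>
    have "range (f \<circ> r) \<subseteq> S" "range (f \<circ> r) \<noteq> {}" using f by auto
    then obtain m where "m \<in> range (f \<circ> r)" "\<forall>t\<in>range (f \<circ> r). m \<le> t"
      using S unfolding well_ordered_real_def by blast
    then obtain N where N: "\<forall>n. f (r N) \<le> f (r n)" by auto
    have "f (r (n + N)) = f (r N)" for n
      using N decseqD[OF dec, of N "n + N"] by (simp add: antisym)
    then have "incseq (f \<circ> (\<lambda>n. r (n + N)))" by (simp add: incseq_def)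
    moreover have "strict_mono (\<lambda>n. r (n + N))" using r(1) by (simp add: strict_mono_def)
    ultimately show ?thesis using that by blast
  qed
qed

lemma well_ordered_real_le_pair:
  fixes f g :: "nat \<Rightarrow> real"
  assumes S: "well_ordered_real S" "\<And>n. f n \<in> S" and T: "well_ordered_real T" "\<And>n. g n \<in> T"
  shows "\<exists>m n. m < n \<and> f m \<le> f n \<and> g m \<le> g n"
proof -
  obtain r1 where r1: "strict_mono r1" "incseq (f \<circ> r1)"
    by (rule well_ordered_real_incseq_subseq[OF S])
  have "(g \<circ> r1) n \<in> T" for n using T(2) by simp
  then obtain r2 where r2: "strict_mono r2" "incseq (g \<circ> r1 \<circ> r2)"
    by (rule well_ordered_real_incseq_subseq[OF T(1)])
  have "r2 0 < r2 1" using r2(1) by (simp add: strict_mono_def)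
  then have "r1 (r2 0) < r1 (r2 1)" "f (r1 (r2 0)) \<le> f (r1 (r2 1))"
    using r1 incseqD[OF r1(2), of "r2 0" "r2 1"] by (simp_all add: strict_mono_def)
  moreover have "g (r1 (r2 0)) \<le> g (r1 (r2 1))" using incseqD[OF r2(2), of 0 1] by simp
  ultimately show ?thesis by blast
qed

lemma well_ordered_real_antidiagonal_finite:
  assumes S: "well_ordered_real S" and T: "well_ordered_real T"
  shows "finite {a \<in> S. c - a \<in> T}"
proof (rule ccontr)
  assume "infinite {a \<in> S. c - a \<in> T}"
  then obtain f :: "nat \<Rightarrow> real" where f: "inj f" "range f \<subseteq> {a \<in> S. c - a \<in> T}"
    using infinite_countable_subset by blast
  have "f n \<in> S" "c - f n \<in> T" for n using f(2) by auto
  then obtain m n where "m < n" "f m \<le> f n" "c - f m \<le> c - f n"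
    using well_ordered_real_le_pair[OF S _ T, of f "\<lambda>n. c - f n"] by blast
  then show False using injD[OF f(1), of m n] by simp
qed

lemma not_well_ordered_real_decseq:
  assumes "\<not> well_ordered_real U"
  obtains f where "\<And>n. f n \<in> U" "\<And>n. f (Suc n) < f n"
proof -
  obtain V where V: "V \<subseteq> U" "V \<noteq> {}" "\<forall>m\<in>V. \<exists>t\<in>V. t < m"
    using assms unfolding well_ordered_real_def by (auto simp: not_le)
  obtain g where g: "\<forall>m\<in>V. g m \<in> V \<and> g m < m" using V(3) by metis
  obtain v where v: "v \<in> V" using V(2) by blast
  have "(g ^^ n) v \<in> V" for n by (induction n) (auto simp: v g)
  then show ?thesis using V(1) g by (intro that[of "\<lambda>n. (g ^^ n) v"]) auto
qed

lemma well_ordered_real_sums: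
  assumes S: "well_ordered_real S" and T: "well_ordered_real T"
  shows "well_ordered_real {a + b | a b. a \<in> S \<and> b \<in> T}"
proof (rule ccontr)
  assume "\<not> ?thesis"
  then obtain s where s: "\<And>n. s n \<in> {a + b | a b. a \<in> S \<and> b \<in> T}" "\<And>n. s (Suc n) < s n"
    using not_well_ordered_real_decseq by blast
  then obtain f g where fg: "\<And>n. s n = f n + g n" "\<And>n. f n \<in> S" "\<And>n. g n \<in> T"
    by simp metis
  obtain m n where "m < n" "f m \<le> f n" "g m \<le> g n"
    using well_ordered_real_le_pair[OF S fg(2) T fg(3)] by blast
  moreover have "- s m < - s n"
    using lift_Suc_mono_less[of "\<lambda>n. - s n", OF _ \<open>m < n\<close>] s(2) by simp
  ultimately show False using fg(1)[of m] fg(1)[of n] by linarith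
qed

section \<open>The ring of Hahn series\<close>

abbreviation well_ordered_support :: "(real \<Rightarrow> complex) \<Rightarrow> bool" where
  "well_ordered_support F \<equiv> well_ordered_real {a. F a \<noteq> 0}"

lemma well_ordered_support_Rep_hahn: "well_ordered_support (Rep_hahn x)"
  using Rep_hahn[of x] by simp

lemma Rep_hahn_Abs_hahn: "well_ordered_support F \<Longrightarrow> Rep_hahn (Abs_hahn F) = F"
  by (simp add: Abs_hahn_inverse)

definition hconv :: "(real \<Rightarrow> complex) \<Rightarrow> (real \<Rightarrow> complex) \<Rightarrow> real \<Rightarrow> complex" where
  "hconv F G c = (\<Sum>a\<in>{a. F a \<noteq> 0 \<and> G (c - a) \<noteq> 0}. F a * G (c - a))"

lemma hconv_antidiagonal_finite:
  "well_ordered_support F \<Longrightarrow> well_ordered_support G \<Longrightarrow> finite {a. F a \<noteq> 0 \<and> G (c - a) \<noteq> 0}"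
  using well_ordered_real_antidiagonal_finite[of "{a. F a \<noteq> 0}" "{a. G a \<noteq> 0}" c] by simp

lemma hconv_support_subset: "{c. hconv F G c \<noteq> 0} \<subseteq> {a + b | a b. F a \<noteq> 0 \<and> G b \<noteq> 0}"
proof
  fix c assume "c \<in> {c. hconv F G c \<noteq> 0}"
  then obtain a where "F a \<noteq> 0" "G (c - a) \<noteq> 0"
    unfolding hconv_def by (metis (mono_tags, lifting) empty_Collect_eq sum.empty mem_Collect_eq)
  then show "c \<in> {a + b | a b. F a \<noteq> 0 \<and> G b \<noteq> 0}" by force
qed

lemma well_ordered_support_hconv:
  assumes "well_ordered_support F" "well_ordered_support G"
  shows "well_ordered_support (hconv F G)"
proof -
  have "well_ordered_real {a + b | a b. F a \<noteq> 0 \<and> G b \<noteq> 0}"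
    using well_ordered_real_sums[OF assms] by simp
  then show ?thesis using hconv_support_subset well_ordered_real_subset by blast
qed

lemma hconv_eq_sum_superset:
  assumes "finite X" "{a. F a \<noteq> 0 \<and> G (c - a) \<noteq> 0} \<subseteq> X"
  shows "hconv F G c = (\<Sum>a\<in>X. F a * G (c - a))"
  unfolding hconv_def by (rule sum.mono_neutral_left[OF assms]) auto

lemma hconv_commute: "hconv F G = hconv G F"
  unfolding hconv_def fun_eq_iff
  by (intro allI sum.reindex_bij_witness[of _ "\<lambda>a. _ - a" "\<lambda>a. _ - a"]) (auto simp: mult.commute)

lemma hconv_hconv_eq_triple_sum:
  assumes F: "well_ordered_support F" and G: "well_ordered_support G" and H: "well_ordered_support H"
  shows "hconv (hconv F G) H c =
    (\<Sum>(a, b)\<in>{(a, b). F a \<noteq> 0 \<and> G b \<noteq> 0 \<and> H (c - a - b) \<noteq> 0}. F a * G b * H (c - a - b))"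
proof -
  define S where "S = {a + b | a b. F a \<noteq> 0 \<and> G b \<noteq> 0}"
  define X where "X = {x \<in> S. c - x \<in> {a. H a \<noteq> 0}}"
  define fib where "fib x = {a. F a \<noteq> 0 \<and> G (x - a) \<noteq> 0}" for x
  have "well_ordered_real S"
    unfolding S_def using well_ordered_real_sums[OF F G] by simp
  then have X: "finite X"
    unfolding X_def using well_ordered_real_antidiagonal_finite H by blast
  have "hconv (hconv F G) H c = (\<Sum>x\<in>X. hconv F G x * H (c - x))"
    using hconv_support_subset[of F G] by (intro hconv_eq_sum_superset[OF X]) (auto simp: X_def S_def)
  also have "\<dots> = (\<Sum>x\<in>X. \<Sum>a\<in>fib x. F a * G (x - a) * H (c - x))"
    unfolding hconv_def fib_def by (simp add: sum_distrib_right)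
  also have "\<dots> = (\<Sum>(x, a)\<in>Sigma X fib. F a * G (x - a) * H (c - x))"
    using X hconv_antidiagonal_finite[OF F G] by (subst sum.Sigma) (auto simp: fib_def)
  also have "\<dots> = (\<Sum>(a, b)\<in>{(a, b). F a \<noteq> 0 \<and> G b \<noteq> 0 \<and> H (c - a - b) \<noteq> 0}. F a * G b * H (c - a - b))"
    by (rule sum.reindex_bij_witness[of _ "\<lambda>(a, b). (a + b, a)" "\<lambda>(x, a). (a, x - a)"])
      (auto simp: X_def S_def fib_def algebra_simps)
  finally show ?thesis .
qed

lemma hconv_assoc:
  assumes "well_ordered_support F" "well_ordered_support G" "well_ordered_support H"
  shows "hconv (hconv F G) H = hconv F (hconv G H)"
proof
  fix c
  have "hconv F (hconv G H) c = hconv (hconv H G) F c"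
    by (simp add: hconv_commute[of F] hconv_commute[of G])
  also have "\<dots> = (\<Sum>(a, b)\<in>{(a, b). H a \<noteq> 0 \<and> G b \<noteq> 0 \<and> F (c - a - b) \<noteq> 0}. H a * G b * F (c - a - b))"
    using assms by (simp add: hconv_hconv_eq_triple_sum)
  also have "\<dots> = (\<Sum>(a, b)\<in>{(a, b). F a \<noteq> 0 \<and> G b \<noteq> 0 \<and> H (c - a - b) \<noteq> 0}. F a * G b * H (c - a - b))"
    by (rule sum.reindex_bij_witness[of _ "\<lambda>(a, b). (c - a - b, b)" "\<lambda>(a, b). (c - a - b, b)"])
      (auto simp: algebra_simps)
  finally show "hconv (hconv F G) H c = hconv F (hconv G H) c"
    using assms by (simp add: hconv_hconv_eq_triple_sum)
qed

lemma hconv_delta: "hconv F (\<lambda>a. if a = 0 then 1 else 0) = F"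
proof
  fix c
  have "{a. F a \<noteq> 0 \<and> (if c - a = 0 then 1 else 0) \<noteq> (0::complex)} = (if F c \<noteq> 0 then {c} else {})"
    by auto
  then show "hconv F (\<lambda>a. if a = 0 then 1 else 0) c = F c" unfolding hconv_def by auto
qed

lemma hconv_add_left:
  assumes F: "well_ordered_support F" and G: "well_ordered_support G" and H: "well_ordered_support H"
  shows "hconv (\<lambda>a. F a + G a) H = (\<lambda>c. hconv F H c + hconv G H c)"
proof
  fix c
  have FG: "well_ordered_support (\<lambda>a. F a + G a)"
    by (rule well_ordered_real_subset[OF well_ordered_real_Un[OF F G]]) auto
  define X where "X = {a. F a \<noteq> 0 \<and> H (c - a) \<noteq> 0} \<union> {a. G a \<noteq> 0 \<and> H (c - a) \<noteq> 0}"
  have X: "finite X"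
    unfolding X_def using hconv_antidiagonal_finite[OF F H] hconv_antidiagonal_finite[OF G H] by blast
  have "hconv (\<lambda>a. F a + G a) H c = (\<Sum>a\<in>X. (F a + G a) * H (c - a))"
    by (rule hconv_eq_sum_superset[OF X]) (auto simp: X_def)
  also have "\<dots> = (\<Sum>a\<in>X. F a * H (c - a)) + (\<Sum>a\<in>X. G a * H (c - a))"
    by (simp add: distrib_right sum.distrib)
  also have "\<dots> = hconv F H c + hconv G H c"
    by (simp add: hconv_eq_sum_superset[OF X] X_def)
  finally show "hconv (\<lambda>a. F a + G a) H c = hconv F H c + hconv G H c" .
qed

instantiation hahn :: comm_ring_1
begin

definition zero_hahn_def: "0 = hzero"
definition one_hahn_def: "1 = Abs_hahn (\<lambda>a. if a = 0 then 1 else 0)"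
definition plus_hahn_def: "x + y = hadd x y"
definition times_hahn_def: "x * y = hmul x y"
definition uminus_hahn_def: "- x = Abs_hahn (\<lambda>a. - Rep_hahn x a)"
definition minus_hahn_def: "x - y = Abs_hahn (\<lambda>a. Rep_hahn x a - Rep_hahn y a)"

lemma Rep_hahn_zero: "Rep_hahn 0 = (\<lambda>_. 0)"
  unfolding zero_hahn_def hzero_def by (rule Rep_hahn_Abs_hahn) (simp add: well_ordered_real_def)

lemma Rep_hahn_one: "Rep_hahn 1 = (\<lambda>a. if a = 0 then 1 else 0)"
  unfolding one_hahn_def
  by (rule Rep_hahn_Abs_hahn, rule well_ordered_real_finite) (rule finite_subset[of _ "{0}"], auto)

lemma Rep_hahn_add: "Rep_hahn (x + y) = (\<lambda>a. Rep_hahn x a + Rep_hahn y a)"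
  unfolding plus_hahn_def hadd_def
  by (rule Rep_hahn_Abs_hahn, rule well_ordered_real_subset[OF
      well_ordered_real_Un[OF well_ordered_support_Rep_hahn[of x] well_ordered_support_Rep_hahn[of y]]]) auto

lemma Rep_hahn_uminus: "Rep_hahn (- x) = (\<lambda>a. - Rep_hahn x a)"
  unfolding uminus_hahn_def by (rule Rep_hahn_Abs_hahn) (simp add: well_ordered_support_Rep_hahn)

lemma Rep_hahn_diff: "Rep_hahn (x - y) = (\<lambda>a. Rep_hahn x a - Rep_hahn y a)"
  unfolding minus_hahn_def
  by (rule Rep_hahn_Abs_hahn, rule well_ordered_real_subset[OF
      well_ordered_real_Un[OF well_ordered_support_Rep_hahn[of x] well_ordered_support_Rep_hahn[of y]]]) auto

lemma Rep_hahn_mult: "Rep_hahn (x * y) = hconv (Rep_hahn x) (Rep_hahn y)"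
  unfolding times_hahn_def hmul_def hconv_def[abs_def]
  by (rule Rep_hahn_Abs_hahn[unfolded hconv_def[abs_def]])
    (intro well_ordered_support_hconv[unfolded hconv_def[abs_def]] well_ordered_support_Rep_hahn)

instance
proof
  fix a b c :: hahn
  note simps = Rep_hahn_inject[symmetric] fun_eq_iff Rep_hahn_zero Rep_hahn_one Rep_hahn_add
    Rep_hahn_uminus Rep_hahn_diff Rep_hahn_mult well_ordered_support_Rep_hahn
  show "a + b + c = a + (b + c)" by (simp add: simps add.assoc)
  show "a + b = b + a" by (simp add: simps add.commute)
  show "0 + a = a" by (simp add: simps)
  show "- a + a = 0" by (simp add: simps)
  show "a - b = a + - b" by (simp add: simps)
  show "a * b * c = a * (b * c)" by (simp add: simps hconv_assoc)
  show "a * b = b * a" by (simp add: simps hconv_commute[of "Rep_hahn a"])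
  show "1 * a = a" by (simp add: simps hconv_commute[of "\<lambda>a. if a = 0 then 1 else 0"] hconv_delta)
  show "(a + b) * c = a * c + b * c" by (simp add: simps hconv_add_left)
  show "(0::hahn) \<noteq> 1" by (simp add: simps)
qed

end

section \<open>Degree and monomials\<close>

lemma hahn_eq_iff: "x = y \<longleftrightarrow> (\<forall>a. Rep_hahn x a = Rep_hahn y a)"
  by (simp add: Rep_hahn_inject[symmetric] fun_eq_iff)

lemma hahn_nonzero_iff: "x \<noteq> 0 \<longleftrightarrow> (\<exists>a. Rep_hahn x a \<noteq> 0)"
  by (simp add: hahn_eq_iff Rep_hahn_zero)

lemma hdeg_least:
  assumes "x \<noteq> 0"
  shows "Rep_hahn x (hdeg x) \<noteq> 0 \<and> (\<forall>a. Rep_hahn x a \<noteq> 0 \<longrightarrow> hdeg x \<le> a)"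
proof -
  obtain m where m: "Rep_hahn x m \<noteq> 0" "\<forall>a. Rep_hahn x a \<noteq> 0 \<longrightarrow> m \<le> a"
    using well_ordered_support_Rep_hahn[of x] assms
    unfolding hahn_nonzero_iff well_ordered_real_def by (metis (mono_tags) empty_iff mem_Collect_eq order_refl)
  moreover have "hdeg x = m"
    unfolding hdeg_def using m by (intro Least_equality) auto
  ultimately show ?thesis by simp
qed

lemma Rep_hahn_hdeg: "x \<noteq> 0 \<Longrightarrow> Rep_hahn x (hdeg x) \<noteq> 0"
  using hdeg_least by blast

lemma Rep_hahn_less_hdeg: "x \<noteq> 0 \<Longrightarrow> a < hdeg x \<Longrightarrow> Rep_hahn x a = 0"
  using hdeg_least by force

lemma hdeg_eqI:
  assumes "Rep_hahn x e \<noteq> 0" "\<And>a. a < e \<Longrightarrow> Rep_hahn x a = 0"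
  shows "x \<noteq> 0 \<and> hdeg x = e"
proof
  show "x \<noteq> 0" using assms(1) hahn_nonzero_iff by blast
  then show "hdeg x = e"
    using assms hdeg_least[of x] by (meson linorder_neqE_linordered_idom not_less)
qed

lemma hdeg_mult:
  assumes x: "x \<noteq> 0" and y: "y \<noteq> 0"
  shows "x * y \<noteq> 0 \<and> hdeg (x * y) = hdeg x + hdeg y"
proof (rule hdeg_eqI)
  have "{a. Rep_hahn x a \<noteq> 0 \<and> Rep_hahn y (hdeg x + hdeg y - a) \<noteq> 0} = {hdeg x}"
    using Rep_hahn_hdeg[OF x] Rep_hahn_hdeg[OF y] Rep_hahn_less_hdeg[OF x] Rep_hahn_less_hdeg[OF y]
    by (force simp: not_less[symmetric])
  then show "Rep_hahn (x * y) (hdeg x + hdeg y) \<noteq> 0"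
    using Rep_hahn_hdeg[OF x] Rep_hahn_hdeg[OF y] by (simp add: Rep_hahn_mult hconv_def)
  fix e assume "e < hdeg x + hdeg y"
  then have "{a. Rep_hahn x a \<noteq> 0 \<and> Rep_hahn y (e - a) \<noteq> 0} = {}"
    using Rep_hahn_less_hdeg[OF x] Rep_hahn_less_hdeg[OF y] by (force simp: not_less[symmetric])
  then show "Rep_hahn (x * y) e = 0"
    unfolding Rep_hahn_mult hconv_def by (simp only: sum.empty)
qed

definition hmonom :: "complex \<Rightarrow> real \<Rightarrow> hahn" where
  "hmonom c e = Abs_hahn (\<lambda>a. if a = e then c else 0)"

lemma Rep_hahn_hmonom: "Rep_hahn (hmonom c e) = (\<lambda>a. if a = e then c else 0)"
  unfolding hmonom_def
  by (rule Rep_hahn_Abs_hahn, rule well_ordered_real_finite) (rule finite_subset[of _ "{e}"], auto)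

lemma hmonom_mult: "hmonom c e * hmonom d f = hmonom (c * d) (e + f)"
proof -
  have "{a. (if a = e then c else 0) \<noteq> 0 \<and> (if x - a = f then d else 0) \<noteq> 0} =
      (if c \<noteq> 0 \<and> d \<noteq> 0 \<and> x = e + f then {e} else {})" for x
    by auto
  then show ?thesis
    by (auto simp: hahn_eq_iff Rep_hahn_mult Rep_hahn_hmonom hconv_def)
qed

lemma hdeg_hmonom: "c \<noteq> 0 \<Longrightarrow> hmonom c e \<noteq> 0 \<and> hdeg (hmonom c e) = e"
  by (rule hdeg_eqI) (simp_all add: Rep_hahn_hmonom)

lemma Rep_hahn_sum: "Rep_hahn (\<Sum>r\<in>R. x r) a = (\<Sum>r\<in>R. Rep_hahn (x r) a)"
  by (induction R rule: infinite_finite_induct) (simp_all add: Rep_hahn_zero Rep_hahn_add)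

lemma Rep_hahn_of_int_mult: "Rep_hahn (of_int k * x) a = of_int k * Rep_hahn x a"
  by (induction k rule: int_induct[where k = 0])
    (simp_all add: Rep_hahn_zero Rep_hahn_add Rep_hahn_diff distrib_right left_diff_distrib)

lemma sum_nonzero_if_unique_min_hdeg:
  fixes x :: "'i \<Rightarrow> hahn" and c :: "'i \<Rightarrow> int"
  assumes R: "finite R" "j \<in> R" and cj: "c j \<noteq> 0" and x: "\<And>r. r \<in> R \<Longrightarrow> x r \<noteq> 0"
    and unique: "\<And>r. r \<in> R \<Longrightarrow> r \<noteq> j \<Longrightarrow> hdeg (x j) < hdeg (x r)"
  shows "(\<Sum>r\<in>R. of_int (c r) * x r) \<noteq> 0"
proof -
  have "(\<Sum>r\<in>R - {j}. of_int (c r) * Rep_hahn (x r) (hdeg (x j))) = 0"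
    using x unique Rep_hahn_less_hdeg by (intro sum.neutral) auto
  then have "Rep_hahn (\<Sum>r\<in>R. of_int (c r) * x r) (hdeg (x j)) = of_int (c j) * Rep_hahn (x j) (hdeg (x j))"
    by (simp add: sum.remove[OF R] Rep_hahn_add Rep_hahn_sum Rep_hahn_of_int_mult)
  then show ?thesis using cj Rep_hahn_hdeg[OF x[OF R(2)]] hahn_nonzero_iff by fastforce
qed

lemma Rep_hahn_numeral_mult: "Rep_hahn (numeral k * x) a = numeral k * Rep_hahn x a"
  using Rep_hahn_of_int_mult[of "numeral k"] by simp

lemmas Rep_hahn_simps = Rep_hahn_add Rep_hahn_diff Rep_hahn_uminus Rep_hahn_numeral_mult Rep_hahn_hmonom

section \<open>Ranks of lifts\<close>

lemma hsum_eq_sum: "hsum r h = (\<Sum>k<r. h k)"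
proof -
  have "hadd = (+)" by (simp add: fun_eq_iff plus_hahn_def)
  then show ?thesis
    by (simp add: hsum_def zero_hahn_def[symmetric] sum_list.eq_foldr[symmetric]
        sum_set_upt_conv_sum_list_nat[symmetric] atLeast0LessThan)
qed

lemma hrank_le_iff: "hrank_le n M r \<longleftrightarrow> (\<exists>B C. \<forall>i<n. \<forall>j<n. M i j = (\<Sum>k<r. B i k * C k j))"
  by (simp add: hrank_le_def hsum_eq_sum times_hahn_def)

lemma hrank_le_mono:
  assumes "hrank_le n M r" "r \<le> s"
  shows "hrank_le n M s"
proof -
  obtain B C where BC: "\<forall>i<n. \<forall>j<n. M i j = (\<Sum>k<r. B i k * C k j)"
    using assms(1) hrank_le_iff by blast
  have "(\<Sum>k<s. (if k < r then B i k else 0) * C k j) = (\<Sum>k<r. B i k * C k j)" for i j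
    using assms(2) by (intro sum.mono_neutral_cong_right) auto
  then show ?thesis
    using BC unfolding hrank_le_iff by (intro exI[of _ "\<lambda>i k. if k < r then B i k else 0"] exI[of _ C]) simp
qed

lemma hrank_le_self: "hrank_le n M n"
  unfolding hrank_le_iff
  by (intro exI[of _ M] exI[of _ "\<lambda>k j. if k = j then 1 else 0"]) (simp add: if_distrib cong: if_cong)

lemma hrank_le_hrank: "hrank_le n M (hrank n M)"
  unfolding hrank_def by (rule LeastI[of _ n]) (rule hrank_le_self)

lemma hrank_least: "hrank_le n M r \<Longrightarrow> hrank n M \<le> r"
  unfolding hrank_def by (rule Least_le)

lemma sym_lift_nonzero: "sym_lift n A M \<Longrightarrow> i < n \<Longrightarrow> j < n \<Longrightarrow> M i j \<noteq> 0 \<and> hdeg (M i j) = A i j"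
  unfolding sym_lift_def by (simp add: zero_hahn_def)

lemma sym_lift_hmonom:
  assumes "\<forall>i<n. \<forall>j<n. A i j = A j i"
  shows "sym_lift n A (\<lambda>i j. hmonom 1 (A i j))"
  using assms hdeg_hmonom[of 1] by (auto simp: sym_lift_def zero_hahn_def[symmetric])

lemma sym_kapranov_rank_le_iff:
  assumes "\<forall>i<n. \<forall>j<n. A i j = A j i"
  shows "sym_kapranov_rank n A \<le> r \<longleftrightarrow> (\<exists>M. sym_lift n A M \<and> hrank_le n M r)"
proof
  have "\<exists>M. sym_lift n A M \<and> hrank n M = sym_kapranov_rank n A"
    unfolding sym_kapranov_rank_def using sym_lift_hmonom[OF assms]
    by (intro LeastI_ex[where P = "\<lambda>r. \<exists>M. sym_lift n A M \<and> hrank n M = r"]) blast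
  then show "sym_kapranov_rank n A \<le> r \<Longrightarrow> \<exists>M. sym_lift n A M \<and> hrank_le n M r"
    using hrank_le_hrank hrank_le_mono by metis
next
  assume "\<exists>M. sym_lift n A M \<and> hrank_le n M r"
  then obtain M where "sym_lift n A M" "hrank n M \<le> r" using hrank_least by blast
  moreover have "sym_kapranov_rank n A \<le> hrank n M"
    unfolding sym_kapranov_rank_def using \<open>sym_lift n A M\<close> by (blast intro: Least_le)
  ultimately show "sym_kapranov_rank n A \<le> r" by simp
qed

lemma sym_monomial_2: "i \<noteq> k \<Longrightarrow> sym_monomial {i, k} \<rho> = {#{i, \<rho> i}, {k, \<rho> k}#}"
  by (simp add: sym_monomial_def mset_set.insert)

lemma trop_value_2: "i \<noteq> k \<Longrightarrow> trop_value A {i, k} \<rho> = A i (\<rho> i) + A k (\<rho> k)"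
  by (simp add: trop_value_def)

lemma bij_betw_2_iff:
  "i \<noteq> k \<Longrightarrow> j \<noteq> l \<Longrightarrow>
    bij_betw \<rho> {i, k} {j, l} \<longleftrightarrow> (\<rho> i = j \<and> \<rho> k = l) \<or> (\<rho> i = l \<and> \<rho> k = j)"
  by (auto simp: bij_betw_def doubleton_eq_iff)

lemma sym_trop_singular_2I:
  assumes ik: "i \<noteq> k" and jl: "j \<noteq> l" and eq: "A i j + A k l = A i l + A k j"
  shows "sym_trop_singular A {i, k} {j, l}"
proof -
  define \<rho>1 where "\<rho>1 x = (if x = i then j else l)" for x :: nat
  define \<rho>2 where "\<rho>2 x = (if x = i then l else j)" for x :: nat
  have bij: "bij_betw \<rho>1 {i, k} {j, l}" "bij_betw \<rho>2 {i, k} {j, l}"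
    using ik by (simp_all add: bij_betw_2_iff[OF ik jl] \<rho>1_def \<rho>2_def)
  have "sym_monomial {i, k} \<rho>1 \<noteq> sym_monomial {i, k} \<rho>2"
    using ik jl by (auto simp: sym_monomial_2 \<rho>1_def \<rho>2_def add_eq_conv_ex doubleton_eq_iff)
  moreover have "trop_value A {i, k} \<rho> = trop_value A {i, k} \<rho>1" if "bij_betw \<rho> {i, k} {j, l}" for \<rho>
    using that eq ik by (auto simp: bij_betw_2_iff[OF ik jl] trop_value_2 \<rho>1_def)
  ultimately show ?thesis
    unfolding sym_trop_singular_def using bij by (metis order_refl)
qed

lemma sym_trop_singular_2_principal:
  assumes ij: "i \<noteq> j" and "sym_trop_singular A {i, j} {i, j}"
  shows "A i i + A j j = A i j + A j i"
proof -
  obtain \<rho>1 \<rho>2 where bij: "bij_betw \<rho>1 {i, j} {i, j}" "bij_betw \<rho>2 {i, j} {i, j}"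
    and mon: "sym_monomial {i, j} \<rho>1 \<noteq> sym_monomial {i, j} \<rho>2"
    and val: "trop_value A {i, j} \<rho>1 = trop_value A {i, j} \<rho>2"
    using assms(2) unfolding sym_trop_singular_def by blast
  have "(\<rho>1 i = i \<and> \<rho>1 j = j) \<or> (\<rho>1 i = j \<and> \<rho>1 j = i)" "(\<rho>2 i = i \<and> \<rho>2 j = j) \<or> (\<rho>2 i = j \<and> \<rho>2 j = i)"
    using bij bij_betw_2_iff[OF ij ij] by blast+
  \<comment> \<open>distinct monomials force one bijection to be the identity and the other the swap\<close>
  then show ?thesis
    using mon val unfolding sym_monomial_2[OF ij] trop_value_2[OF ij] by (elim disjE conjE) simp_all
qed

lemma sym_trop_singular_2_if_rank_1_lift:
  assumes L: "sym_lift n A M" and R: "hrank_le n M 1"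
    and I: "I \<subseteq> {..<n}" "card I = 2" and J: "J \<subseteq> {..<n}" "card J = 2"
  shows "sym_trop_singular A I J"
proof -
  obtain B C where "\<forall>i<n. \<forall>j<n. M i j = (\<Sum>k<1::nat. B i k * C k j)"
    using R unfolding hrank_le_iff by blast
  then have BC: "M i j = B i 0 * C 0 j" if "i < n" "j < n" for i j
    using that by simp
  have deg: "A i j = hdeg (B i 0) + hdeg (C 0 j)" if "i < n" "j < n" for i j
  proof -
    have "B i 0 * C 0 j \<noteq> 0" "hdeg (B i 0 * C 0 j) = A i j"
      using sym_lift_nonzero[OF L that] BC that by auto
    then show ?thesis using hdeg_mult[of "B i 0" "C 0 j"] by force
  qed
  obtain i k where ik: "I = {i, k}" "i \<noteq> k" using I(2) unfolding card_2_iff by blast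
  obtain j l where jl: "J = {j, l}" "j \<noteq> l" using J(2) unfolding card_2_iff by blast
  have "i < n" "k < n" "j < n" "l < n" using I(1) J(1) ik(1) jl(1) by auto
  then have "A i j + A k l = A i l + A k j" by (simp add: deg)
  then show ?thesis unfolding ik(1) jl(1) by (rule sym_trop_singular_2I[OF ik(2) jl(2)])
qed

lemma rank_1_sym_lift_exists:
  assumes "\<forall>i<n. \<forall>j<n. A i j = (A i i + A j j) / 2"
  shows "\<exists>M. sym_lift n A M \<and> hrank_le n M 1"
proof -
  define x where "x i = hmonom 1 (A i i / 2)" for i
  have "x i * x j \<noteq> 0 \<and> hdeg (x i * x j) = A i j" if "i < n" "j < n" for i j
  proof -
    have "A i j = (A i i + A j j) / 2" using assms that by blast
    then have "A i j = A i i / 2 + A j j / 2" by (simp only: add_divide_distrib)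
    then show ?thesis using hdeg_mult[of "x i" "x j"] hdeg_hmonom[of 1] by (simp add: x_def)
  qed
  then have "sym_lift n A (\<lambda>i j. x i * x j)"
    unfolding sym_lift_def zero_hahn_def[symmetric] by (simp add: mult.commute)
  moreover have "hrank_le n (\<lambda>i j. x i * x j) 1"
    unfolding hrank_le_iff by (intro exI[of _ "\<lambda>i k. x i"] exI[of _ "\<lambda>k j. x j"]) simp
  ultimately show ?thesis by blast
qed

lemma sym_kapranov_rank_le_1_iff:
  assumes sym: "\<forall>i<n. \<forall>j<n. A i j = A j i"
  shows "sym_kapranov_rank n A \<le> 1 \<longleftrightarrow>
    (\<forall>I J. I \<subseteq> {..<n} \<and> J \<subseteq> {..<n} \<and> card I = 2 \<and> card J = 2 \<longrightarrow> sym_trop_singular A I J)"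
proof
  assume "sym_kapranov_rank n A \<le> 1"
  then show "\<forall>I J. I \<subseteq> {..<n} \<and> J \<subseteq> {..<n} \<and> card I = 2 \<and> card J = 2 \<longrightarrow> sym_trop_singular A I J"
    using sym_kapranov_rank_le_iff[OF sym] sym_trop_singular_2_if_rank_1_lift by blast
next
  assume sing: "\<forall>I J. I \<subseteq> {..<n} \<and> J \<subseteq> {..<n} \<and> card I = 2 \<and> card J = 2 \<longrightarrow> sym_trop_singular A I J"
  have "A i j = (A i i + A j j) / 2" if "i < n" "j < n" for i j
  proof (cases "i = j")
    case False
    then have "sym_trop_singular A {i, j} {i, j}" using sing that by auto
    then show ?thesis using sym_trop_singular_2_principal[OF False] sym that by simp
  qed simp
  then show "sym_kapranov_rank n A \<le> 1"
    using sym_kapranov_rank_le_iff[OF sym] rank_1_sym_lift_exists by blast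
qed

section \<open>Tropical rank\<close>

definition has_nonsingular_minor :: "nat \<Rightarrow> (nat \<Rightarrow> nat \<Rightarrow> real) \<Rightarrow> nat \<Rightarrow> bool" where
  "has_nonsingular_minor n A r \<longleftrightarrow>
    (\<exists>I J. I \<subseteq> {..<n} \<and> J \<subseteq> {..<n} \<and> card I = r \<and> card J = r \<and> \<not> sym_trop_singular A I J)"

lemma has_nonsingular_minor_0: "has_nonsingular_minor n A 0"
  unfolding has_nonsingular_minor_def sym_trop_singular_def
  by (intro exI[of _ "{}"]) (simp add: sym_monomial_def)

lemma has_nonsingular_minor_le: "has_nonsingular_minor n A r \<Longrightarrow> r \<le> n"
  unfolding has_nonsingular_minor_def by (metis card_lessThan card_mono finite_lessThan)

lemma sym_trop_rank_eq_iff: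
  "sym_trop_rank n A = r \<longleftrightarrow>
    has_nonsingular_minor n A r \<and> (\<forall>s. has_nonsingular_minor n A s \<longrightarrow> s \<le> r)"
proof -
  have rank: "sym_trop_rank n A = (GREATEST r. has_nonsingular_minor n A r)"
    unfolding sym_trop_rank_def has_nonsingular_minor_def ..
  show ?thesis
  proof
    assume "sym_trop_rank n A = r"
    then show "has_nonsingular_minor n A r \<and> (\<forall>s. has_nonsingular_minor n A s \<longrightarrow> s \<le> r)"
      unfolding rank using has_nonsingular_minor_0 has_nonsingular_minor_le
      by (metis GreatestI_nat Greatest_le_nat)
  qed (auto simp: rank intro: Greatest_equality)
qed

lemma sym_trop_rank_3_eq_2_iff:
  "sym_trop_rank 3 A = 2 \<longleftrightarrow> has_nonsingular_minor 3 A 2 \<and> sym_trop_singular A {0, 1, 2} {0, 1, 2}"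
proof -
  have "{..<3::nat} = {0, 1, 2}" by auto
  then have "has_nonsingular_minor 3 A 3 \<longleftrightarrow> \<not> sym_trop_singular A {0, 1, 2} {0, 1, 2}"
    unfolding has_nonsingular_minor_def
    by (metis card_lessThan card_subset_eq finite_lessThan order_refl)
  moreover have "(\<forall>s. has_nonsingular_minor 3 A s \<longrightarrow> s \<le> 2) \<longleftrightarrow> \<not> has_nonsingular_minor 3 A 3"
  proof
    assume "\<not> has_nonsingular_minor 3 A 3"
    show "\<forall>s. has_nonsingular_minor 3 A s \<longrightarrow> s \<le> 2"
    proof (intro allI impI)
      fix s assume "has_nonsingular_minor 3 A s"
      then have "s \<le> 3" "s \<noteq> 3"
        using has_nonsingular_minor_le \<open>\<not> has_nonsingular_minor 3 A 3\<close> by auto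
      then show "s \<le> 2" by linarith
    qed
  qed fastforce
  ultimately show ?thesis unfolding sym_trop_rank_eq_iff by blast
qed

section \<open>The symmetric 3 by 3 determinant\<close>

text \<open>For symmetric M, det M is the sum over k < 5 of sym_det3_sign k * sym_det3_term M k (the
  two 3-cycles give the same term, hence the coefficient 2), and sym_det3_val A k is the tropical
  value of the k-th term, attained by the permutation sym_det3_perm k.\<close>

definition sym_det3_term :: "(nat \<Rightarrow> nat \<Rightarrow> 'a::comm_ring_1) \<Rightarrow> nat \<Rightarrow> 'a" where
  "sym_det3_term M k = [M 0 0 * M 1 1 * M 2 2, M 0 0 * M 1 2 * M 1 2, M 1 1 * M 0 2 * M 0 2,
     M 2 2 * M 0 1 * M 0 1, M 0 1 * M 1 2 * M 0 2] ! k"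

definition sym_det3_sign :: "nat \<Rightarrow> int" where
  "sym_det3_sign k = [1, -1, -1, -1, 2] ! k"

definition sym_det3_val :: "(nat \<Rightarrow> nat \<Rightarrow> real) \<Rightarrow> nat \<Rightarrow> real" where
  "sym_det3_val A k = [A 0 0 + A 1 1 + A 2 2, A 0 0 + 2 * A 1 2, A 1 1 + 2 * A 0 2,
     A 2 2 + 2 * A 0 1, A 0 1 + A 1 2 + A 0 2] ! k"

definition sym_det3_perm :: "nat \<Rightarrow> nat \<Rightarrow> nat" where
  "sym_det3_perm k = [id, transpose 1 2, transpose 0 2, transpose 0 1, transpose 0 1 \<circ> transpose 1 2] ! k"

definition sym_det3_tie :: "(nat \<Rightarrow> nat \<Rightarrow> real) \<Rightarrow> bool" where
  "sym_det3_tie A \<longleftrightarrow>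
    (\<exists>p<5. \<exists>q<5. p \<noteq> q \<and> sym_det3_val A p = sym_det3_val A q \<and> (\<forall>r<5. sym_det3_val A p \<le> sym_det3_val A r))"

lemma less_3_cases: "(i::nat) < 3 \<longleftrightarrow> i = 0 \<or> i = 1 \<or> i = 2"
  by auto

lemma less_5_cases: "(k::nat) < 5 \<longleftrightarrow> k = 0 \<or> k = 1 \<or> k = 2 \<or> k = 3 \<or> k = 4"
  by auto

lemma sym_monomial_3: "sym_monomial {0, 1, 2} \<rho> = {#{0, \<rho> 0}, {1, \<rho> 1}, {2, \<rho> 2}#}"
  by (simp add: sym_monomial_def mset_set.insert)

lemma trop_value_3: "trop_value A {0, 1, 2} \<rho> = A 0 (\<rho> 0) + A 1 (\<rho> 1) + A 2 (\<rho> 2)"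
  by (simp add: trop_value_def)

lemma bij_betw_3_cases:
  assumes "bij_betw \<rho> {0, 1, 2::nat} {0, 1, 2}"
  shows "(\<rho> 0, \<rho> 1, \<rho> 2) \<in> {(0, 1, 2), (0, 2, 1), (2, 1, 0), (1, 0, 2), (1, 2, 0), (2, 0, 1)}"
proof -
  have "\<rho> 0 \<in> {0, 1, 2}" "\<rho> 1 \<in> {0, 1, 2}" "\<rho> 2 \<in> {0, 1, 2}"
    using bij_betw_apply[OF assms] by auto
  moreover have "\<rho> 0 \<noteq> \<rho> 1" "\<rho> 0 \<noteq> \<rho> 2" "\<rho> 1 \<noteq> \<rho> 2"
    using bij_betw_imp_inj_on[OF assms] by (auto dest: inj_onD)
  ultimately show ?thesis by (elim insertE emptyE) simp_all
qed

lemma bij_betw_sym_det3_perm: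
  assumes "k < 5"
  shows "bij_betw (sym_det3_perm k) {0, 1, 2} {0, 1, 2}"
proof -
  have "bij_betw (transpose 0 1 \<circ> transpose 1 2) {0, 1, 2::nat} {0, 1, 2}"
    by (rule bij_betw_trans[of _ _ "{0, 1, 2}"]) simp_all
  then show ?thesis
    using assms unfolding less_5_cases sym_det3_perm_def by (elim disjE) simp_all
qed

lemma trop_value_sym_det3_perm:
  assumes "\<forall>i<3. \<forall>j<3. A i j = A j i" "k < 5"
  shows "trop_value A {0, 1, 2} (sym_det3_perm k) = sym_det3_val A k"
  using assms(2) assms(1)[rule_format, of 2 1] assms(1)[rule_format, of 2 0] assms(1)[rule_format, of 1 0]
  unfolding less_5_cases trop_value_3 sym_det3_perm_def sym_det3_val_def
  by (elim disjE) simp_all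

lemma sym_monomial_sym_det3_perm_inj:
  assumes "p < 5" "q < 5" "sym_monomial {0, 1, 2} (sym_det3_perm p) = sym_monomial {0, 1, 2} (sym_det3_perm q)"
  shows "p = q"
proof -
  have "count (sym_monomial {0, 1, 2} (sym_det3_perm p)) {i} = count (sym_monomial {0, 1, 2} (sym_det3_perm q)) {i}"
    for i :: nat
    using assms(3) by simp
  from this[of 0] this[of 1] this[of 2] show ?thesis
    using assms(1,2) unfolding less_5_cases sym_monomial_3 sym_det3_perm_def
    by (elim disjE) simp_all
qed

lemma sym_det3_perm_representative:
  assumes "bij_betw \<rho> {0, 1, 2} {0, 1, 2}" "\<forall>i<3. \<forall>j<3. A i j = A j i"
  shows "\<exists>k<5. trop_value A {0, 1, 2} \<rho> = sym_det3_val A k \<and>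
    sym_monomial {0, 1, 2} \<rho> = sym_monomial {0, 1, 2} (sym_det3_perm k)"
proof -
  have \<rho>: "(\<rho> 0, \<rho> 1, \<rho> 2) \<in> {(0, 1, 2), (0, 2, 1), (2, 1, 0), (1, 0, 2), (1, 2, 0), (2, 0, 1)}"
    by (rule bij_betw_3_cases[OF assms(1)])
  define k :: nat where "k = (if \<rho> 0 = 0 then if \<rho> 1 = 1 then 0 else 1
    else if \<rho> 1 = 1 then 2 else if \<rho> 2 = 2 then 3 else 4)"
  have "k < 5" by (simp add: k_def)
  moreover have "trop_value A {0, 1, 2} \<rho> = sym_det3_val A k \<and>
    sym_monomial {0, 1, 2} \<rho> = sym_monomial {0, 1, 2} (sym_det3_perm k)"
    using \<rho> assms(2)[rule_format, of 2 1] assms(2)[rule_format, of 2 0] assms(2)[rule_format, of 1 0]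
    unfolding sym_monomial_3 trop_value_3
    by (auto simp: k_def sym_det3_perm_def sym_det3_val_def insert_commute add_mset_commute)
  ultimately show ?thesis by blast
qed

lemma sym_trop_singular_3_iff:
  assumes sym: "\<forall>i<3. \<forall>j<3. A i j = A j i"
  shows "sym_trop_singular A {0, 1, 2} {0, 1, 2} \<longleftrightarrow> sym_det3_tie A"
proof
  assume "sym_trop_singular A {0, 1, 2} {0, 1, 2}"
  then obtain \<rho>1 \<rho>2 where bij: "bij_betw \<rho>1 {0, 1, 2} {0, 1, 2}" "bij_betw \<rho>2 {0, 1, 2} {0, 1, 2}"
    and mon: "sym_monomial {0, 1, 2} \<rho>1 \<noteq> sym_monomial {0, 1, 2} \<rho>2"
    and val: "trop_value A {0, 1, 2} \<rho>1 = trop_value A {0, 1, 2} \<rho>2"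
    and min: "\<forall>\<rho>. bij_betw \<rho> {0, 1, 2} {0, 1, 2} \<longrightarrow> trop_value A {0, 1, 2} \<rho>1 \<le> trop_value A {0, 1, 2} \<rho>"
    unfolding sym_trop_singular_def by blast
  obtain p where p: "p < 5" "trop_value A {0, 1, 2} \<rho>1 = sym_det3_val A p"
    "sym_monomial {0, 1, 2} \<rho>1 = sym_monomial {0, 1, 2} (sym_det3_perm p)"
    using sym_det3_perm_representative[OF bij(1) sym] by blast
  obtain q where q: "q < 5" "trop_value A {0, 1, 2} \<rho>2 = sym_det3_val A q"
    "sym_monomial {0, 1, 2} \<rho>2 = sym_monomial {0, 1, 2} (sym_det3_perm q)"
    using sym_det3_perm_representative[OF bij(2) sym] by blast
  have "sym_det3_val A p \<le> sym_det3_val A r" if "r < 5" for r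
    using min bij_betw_sym_det3_perm[OF that] trop_value_sym_det3_perm[OF sym that] p(2) by metis
  moreover have "p \<noteq> q" using p(3) q(3) mon by auto
  ultimately show "sym_det3_tie A"
    unfolding sym_det3_tie_def using p q val by metis
next
  assume "sym_det3_tie A"
  then obtain p q where pq: "p < 5" "q < 5" "p \<noteq> q" "sym_det3_val A p = sym_det3_val A q"
    and min: "\<forall>r<5. sym_det3_val A p \<le> sym_det3_val A r"
    unfolding sym_det3_tie_def by blast
  have "trop_value A {0, 1, 2} (sym_det3_perm p) \<le> trop_value A {0, 1, 2} \<rho>"
    if "bij_betw \<rho> {0, 1, 2} {0, 1, 2}" for \<rho>
    using sym_det3_perm_representative[OF that sym] min trop_value_sym_det3_perm[OF sym pq(1)] by force
  then show "sym_trop_singular A {0, 1, 2} {0, 1, 2}"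
    unfolding sym_trop_singular_def
    using bij_betw_sym_det3_perm[OF pq(1)] bij_betw_sym_det3_perm[OF pq(2)]
      sym_monomial_sym_det3_perm_inj[OF pq(1,2)] pq(3,4)
      trop_value_sym_det3_perm[OF sym pq(1)] trop_value_sym_det3_perm[OF sym pq(2)]
    by metis
qed

lemma sym_det3_unique_min_if_not_tie:
  assumes "\<not> sym_det3_tie A"
  obtains k where "k < 5" "\<And>r. r < 5 \<Longrightarrow> r \<noteq> k \<Longrightarrow> sym_det3_val A k < sym_det3_val A r"
proof -
  have "\<exists>k. is_arg_min (sym_det3_val A) (\<lambda>k. k < 5) k"
    using ex_is_arg_min_if_finite[of "{..<5::nat}" "sym_det3_val A"] by force
  then obtain k where k: "k < 5" "\<forall>r<5. sym_det3_val A k \<le> sym_det3_val A r"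
    unfolding is_arg_min_def by (meson not_less)
  show ?thesis
  proof (rule that[OF k(1)])
    fix r assume "r < 5" "r \<noteq> k"
    then show "sym_det3_val A k < sym_det3_val A r"
      using assms k unfolding sym_det3_tie_def by (metis le_less)
  qed
qed

lemma sym_det3_eq_0_if_rank_2:
  fixes M :: "nat \<Rightarrow> nat \<Rightarrow> 'a::comm_ring_1"
  assumes rank: "\<forall>i<3. \<forall>j<3. M i j = (\<Sum>k<2::nat. B i k * C k j)"
    and sym: "M 1 0 = M 0 1" "M 2 0 = M 0 2" "M 2 1 = M 1 2"
  shows "(\<Sum>k<5. of_int (sym_det3_sign k) * sym_det3_term M k) = 0"
proof -
  have e: "M i j = B i 0 * C 0 j + B i 1 * C 1 j" if "i < 3" "j < 3" for i j
    using rank that by (simp add: numeral_2_eq_2)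
  have "M 0 0 * M 1 1 * M 2 2 - M 0 0 * M 1 2 * M 2 1 - M 0 1 * M 1 0 * M 2 2
      + M 0 1 * M 1 2 * M 2 0 + M 0 2 * M 1 0 * M 2 1 - M 0 2 * M 1 1 * M 2 0 = 0"
    using e[of 0 0] e[of 0 1] e[of 0 2] e[of 1 0] e[of 1 1] e[of 1 2] e[of 2 0] e[of 2 1] e[of 2 2]
    by (simp add: algebra_simps)
  then show ?thesis
    using sym by (simp add: sym_det3_term_def sym_det3_sign_def numeral_eq_Suc algebra_simps)
qed

lemma sym_det3_tie_if_rank_2_lift:
  assumes L: "sym_lift 3 A M" and R: "hrank_le 3 M 2"
  shows "sym_det3_tie A"
proof (rule ccontr)
  assume "\<not> sym_det3_tie A"
  then obtain k where k: "k < 5" "\<And>r. r < 5 \<Longrightarrow> r \<noteq> k \<Longrightarrow> sym_det3_val A k < sym_det3_val A r"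
    using sym_det3_unique_min_if_not_tie by blast
  have nz: "M i j \<noteq> 0" and dg: "hdeg (M i j) = A i j" if "i < 3" "j < 3" for i j
    using sym_lift_nonzero[OF L that] by simp_all
  have prod3: "x * y * z \<noteq> 0 \<and> hdeg (x * y * z) = hdeg x + hdeg y + hdeg z"
    if "x \<noteq> 0" "y \<noteq> 0" "z \<noteq> 0" for x y z :: hahn
    using hdeg_mult[OF that(1,2)] hdeg_mult[of "x * y" z] that(3) by simp
  have terms: "sym_det3_term M r \<noteq> 0 \<and> hdeg (sym_det3_term M r) = sym_det3_val A r" if "r < 5" for r
    using that unfolding less_5_cases
    by (elim disjE) (simp_all add: sym_det3_term_def sym_det3_val_def prod3 nz dg)
  have "sym_det3_sign k \<noteq> 0"
    using k(1) unfolding less_5_cases sym_det3_sign_def by (elim disjE) simp_all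
  then have "(\<Sum>r<5. of_int (sym_det3_sign r) * sym_det3_term M r) \<noteq> 0"
    using k terms by (intro sum_nonzero_if_unique_min_hdeg) auto
  moreover obtain B C where "\<forall>i<3. \<forall>j<3. M i j = (\<Sum>k<2::nat. B i k * C k j)"
    using R unfolding hrank_le_iff by blast
  moreover have "M 1 0 = M 0 1" "M 2 0 = M 0 2" "M 2 1 = M 1 2"
    using L unfolding sym_lift_def by simp_all
  ultimately show False using sym_det3_eq_0_if_rank_2 by blast
qed

section \<open>Lifts of the form p q^T + q p^T\<close>

definition pq_liftable :: "nat \<Rightarrow> (nat \<Rightarrow> nat \<Rightarrow> real) \<Rightarrow> bool" where
  "pq_liftable n N \<longleftrightarrow> (\<exists>p q :: nat \<Rightarrow> hahn. \<forall>i<n. \<forall>j<n.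
     p i * q j + q i * p j \<noteq> 0 \<and> hdeg (p i * q j + q i * p j) = N i j)"

lemma rank_2_sym_lift_if_pq_liftable:
  assumes "pq_liftable n A"
  shows "\<exists>M. sym_lift n A M \<and> hrank_le n M 2"
proof -
  obtain p q :: "nat \<Rightarrow> hahn" where pq: "\<forall>i<n. \<forall>j<n.
      p i * q j + q i * p j \<noteq> 0 \<and> hdeg (p i * q j + q i * p j) = A i j"
    using assms unfolding pq_liftable_def by blast
  have "sym_lift n A (\<lambda>i j. p i * q j + q i * p j)"
    using pq unfolding sym_lift_def zero_hahn_def[symmetric] by (simp add: algebra_simps)
  moreover have "hrank_le n (\<lambda>i j. p i * q j + q i * p j) 2"
    unfolding hrank_le_iff
    by (intro exI[of _ "\<lambda>i k. if k = 0 then p i else q i"] exI[of _ "\<lambda>k j. if k = 0 then q j else p j"])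
      (simp add: numeral_2_eq_2)
  ultimately show ?thesis by blast
qed

lemma pq_liftable_transpose:
  assumes "a < n" "b < n" "pq_liftable n (\<lambda>i j. N (transpose a b i) (transpose a b j))"
  shows "pq_liftable n N"
proof -
  let ?\<tau> = "transpose a b"
  obtain p q :: "nat \<Rightarrow> hahn" where pq: "\<forall>i<n. \<forall>j<n.
      p i * q j + q i * p j \<noteq> 0 \<and> hdeg (p i * q j + q i * p j) = N (?\<tau> i) (?\<tau> j)"
    using assms(3) unfolding pq_liftable_def by blast
  have "?\<tau> i < n" if "i < n" for i
    using assms(1,2) that by (simp add: transpose_def)
  then show ?thesis
    unfolding pq_liftable_def using pq by (intro exI[of _ "p \<circ> ?\<tau>"] exI[of _ "q \<circ> ?\<tau>"]) simp
qed

lemma pq_liftable_shift: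
  assumes "pq_liftable n (\<lambda>i j. A i j - x i - x j)"
  shows "pq_liftable n A"
proof -
  obtain p q :: "nat \<Rightarrow> hahn" where pq: "\<forall>i<n. \<forall>j<n.
      p i * q j + q i * p j \<noteq> 0 \<and> hdeg (p i * q j + q i * p j) = A i j - x i - x j"
    using assms unfolding pq_liftable_def by blast
  define t where "t i = hmonom 1 (x i)" for i
  have "t i * p i * (t j * q j) + t i * q i * (t j * p j) = t i * t j * (p i * q j + q i * p j)" for i j
    by (simp add: algebra_simps)
  moreover have "t i * t j \<noteq> 0 \<and> hdeg (t i * t j) = x i + x j" for i j
    using hdeg_mult[of "t i" "t j"] hdeg_hmonom[of 1] by (simp add: t_def)
  ultimately show ?thesis
    unfolding pq_liftable_def using pq hdeg_mult
    by (intro exI[of _ "\<lambda>i. t i * p i"] exI[of _ "\<lambda>i. t i * q i"]) simp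
qed

lemma pq_liftable_tree:
  assumes "\<forall>i<n. \<forall>j<n. N i j = - \<bar>\<alpha> i - \<alpha> j\<bar>"
  shows "pq_liftable n N"
proof -
  have "hmonom 1 (\<alpha> i) * hmonom 1 (- \<alpha> j) + hmonom 1 (- \<alpha> i) * hmonom 1 (\<alpha> j) \<noteq> 0 \<and>
      hdeg (hmonom 1 (\<alpha> i) * hmonom 1 (- \<alpha> j) + hmonom 1 (- \<alpha> i) * hmonom 1 (\<alpha> j)) = - \<bar>\<alpha> i - \<alpha> j\<bar>"
    for i j
    by (rule hdeg_eqI) (auto simp: hmonom_mult Rep_hahn_simps abs_if split: if_splits)
  then show ?thesis
    unfolding pq_liftable_def using assms
    by (intro exI[of _ "\<lambda>i. hmonom 1 (\<alpha> i)"] exI[of _ "\<lambda>i. hmonom 1 (- \<alpha> i)"]) simp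
qed

lemma pq_liftable_cong:
  "(\<And>i j. i < n \<Longrightarrow> j < n \<Longrightarrow> N i j = N' i j) \<Longrightarrow> pq_liftable n N \<longleftrightarrow> pq_liftable n N'"
  unfolding pq_liftable_def by auto

definition zero_diag_sym3 :: "real \<Rightarrow> real \<Rightarrow> real \<Rightarrow> nat \<Rightarrow> nat \<Rightarrow> real" where
  "zero_diag_sym3 a b c i j = [[0, a, b], [a, 0, c], [b, c, 0]] ! i ! j"

lemma pq_liftable_3_zero_edge:
  assumes "b \<ge> 0" "c \<ge> 0"
  shows "pq_liftable 3 (zero_diag_sym3 0 b c)"
proof -
  \<comment> \<open>the coefficients 3 keep the constant terms from cancelling when b or c is 0\<close>
  define q where
    "q i = [hmonom 1 0, hmonom 1 0 + hmonom (-3) b + hmonom 3 c, hmonom (-1) 0 + hmonom 3 b] ! i" for i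
  have "hmonom 1 0 * q j + q i * hmonom 1 0 \<noteq> 0 \<and>
      hdeg (hmonom 1 0 * q j + q i * hmonom 1 0) = zero_diag_sym3 0 b c i j"
    if "i < 3" "j < 3" for i j
    by (insert assms that[unfolded less_3_cases], elim disjE; rule hdeg_eqI;
        auto simp: zero_diag_sym3_def q_def distrib_left distrib_right hmonom_mult Rep_hahn_simps)
  then show ?thesis
    unfolding pq_liftable_def by (intro exI[of _ "\<lambda>_. hmonom 1 0"] exI[of _ q]) simp
qed

lemma pq_liftable_3_equal_edges:
  assumes "m \<le> 0" "c \<ge> 0"
  shows "pq_liftable 3 (zero_diag_sym3 m m c)"
proof (cases "m = 0")
  case True
  then show ?thesis using pq_liftable_3_zero_edge assms(2) by simp
next
  case False
  define p where "p i = [hmonom 1 0, hmonom 1 (- m), hmonom 1 (- m)] ! i" for i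
  define q where "q i = [hmonom 1 0, hmonom 1 m, hmonom (-1) m + hmonom 3 (m + c)] ! i" for i
  have "p i * q j + q i * p j \<noteq> 0 \<and> hdeg (p i * q j + q i * p j) = zero_diag_sym3 m m c i j"
    if "i < 3" "j < 3" for i j
    by (insert assms False that[unfolded less_3_cases], elim disjE; rule hdeg_eqI;
        auto simp: zero_diag_sym3_def p_def q_def distrib_left distrib_right hmonom_mult Rep_hahn_simps)
  then show ?thesis
    unfolding pq_liftable_def by blast
qed

lemma
  shows pq_liftable_zero_diag_sym3_swap_ab:
      "pq_liftable 3 (zero_diag_sym3 b a c) \<Longrightarrow> pq_liftable 3 (zero_diag_sym3 a b c)"
    and pq_liftable_zero_diag_sym3_swap_ac:
      "pq_liftable 3 (zero_diag_sym3 c b a) \<Longrightarrow> pq_liftable 3 (zero_diag_sym3 a b c)"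
    and pq_liftable_zero_diag_sym3_swap_bc:
      "pq_liftable 3 (zero_diag_sym3 a c b) \<Longrightarrow> pq_liftable 3 (zero_diag_sym3 a b c)"
proof -
  have swap: "pq_liftable 3 N' \<Longrightarrow> pq_liftable 3 N"
    if "u < 3" "v < 3" "\<forall>i<3. \<forall>j<3. N (transpose u v i) (transpose u v j) = N' i j" for u v N N'
    using that pq_liftable_transpose[of u 3 v N]
      pq_liftable_cong[of 3 "\<lambda>i j. N (transpose u v i) (transpose u v j)" N']
    by blast
  show "pq_liftable 3 (zero_diag_sym3 b a c) \<Longrightarrow> pq_liftable 3 (zero_diag_sym3 a b c)"
    by (rule swap[of 1 2]) (simp_all add: less_3_cases zero_diag_sym3_def)
  show "pq_liftable 3 (zero_diag_sym3 c b a) \<Longrightarrow> pq_liftable 3 (zero_diag_sym3 a b c)"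
    by (rule swap[of 0 2]) (simp_all add: less_3_cases zero_diag_sym3_def)
  show "pq_liftable 3 (zero_diag_sym3 a c b) \<Longrightarrow> pq_liftable 3 (zero_diag_sym3 a b c)"
    by (rule swap[of 0 1]) (simp_all add: less_3_cases zero_diag_sym3_def)
qed

lemma sym_det3_val_zero_diag_sym3:
  "sym_det3_val (zero_diag_sym3 a b c) k = [0, 2 * c, 2 * b, 2 * a, a + b + c] ! k"
  by (simp add: sym_det3_val_def zero_diag_sym3_def add_ac)

lemma sym_det3_tie_zero_diag_sym3_cases:
  assumes "sym_det3_tie (zero_diag_sym3 a b c)"
  shows "(a = 0 \<and> b \<ge> 0 \<and> c \<ge> 0) \<or> (b = 0 \<and> a \<ge> 0 \<and> c \<ge> 0) \<or> (c = 0 \<and> a \<ge> 0 \<and> b \<ge> 0) \<or>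
    (a = b \<and> a \<le> 0 \<and> c \<ge> 0) \<or> (a = c \<and> a \<le> 0 \<and> b \<ge> 0) \<or> (b = c \<and> b \<le> 0 \<and> a \<ge> 0) \<or>
    (a = b + c \<and> b \<le> 0 \<and> c \<le> 0) \<or> (b = a + c \<and> a \<le> 0 \<and> c \<le> 0) \<or> (c = a + b \<and> a \<le> 0 \<and> b \<le> 0)"
proof -
  define v where "v = [0, 2 * c, 2 * b, 2 * a, a + b + c]"
  obtain p q where pq: "p < 5" "q < 5" "p \<noteq> q" "v ! p = v ! q" and min: "\<forall>r<5. v ! p \<le> v ! r"
    using assms unfolding sym_det3_tie_def sym_det3_val_zero_diag_sym3 v_def by blast
  have "v ! p \<le> 0" "v ! p \<le> 2 * c" "v ! p \<le> 2 * b" "v ! p \<le> 2 * a" "v ! p \<le> a + b + c"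
    using min[rule_format, of 0] min[rule_format, of 1] min[rule_format, of 2] min[rule_format, of 3]
      min[rule_format, of 4]
    by (simp_all add: v_def)
  then show ?thesis
    using pq(1-4) unfolding less_5_cases by (elim disjE) (simp_all add: v_def)
qed

lemma pq_liftable_zero_diag_sym3_if_tie:
  assumes "sym_det3_tie (zero_diag_sym3 a b c)"
  shows "pq_liftable 3 (zero_diag_sym3 a b c)"
  using sym_det3_tie_zero_diag_sym3_cases[OF assms]
proof (elim disjE conjE)
  assume "a = 0" "b \<ge> 0" "c \<ge> 0"
  then show ?thesis using pq_liftable_3_zero_edge by simp
next
  assume "b = 0" "a \<ge> 0" "c \<ge> 0"
  then show ?thesis using pq_liftable_3_zero_edge pq_liftable_zero_diag_sym3_swap_ab by simp
next
  assume "c = 0" "a \<ge> 0" "b \<ge> 0"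
  then show ?thesis using pq_liftable_3_zero_edge pq_liftable_zero_diag_sym3_swap_ac by simp
next
  assume "a = b" "a \<le> 0" "c \<ge> 0"
  then show ?thesis using pq_liftable_3_equal_edges by simp
next
  assume "a = c" "a \<le> 0" "b \<ge> 0"
  then show ?thesis using pq_liftable_3_equal_edges pq_liftable_zero_diag_sym3_swap_bc by simp
next
  assume "b = c" "b \<le> 0" "a \<ge> 0"
  then show ?thesis using pq_liftable_3_equal_edges pq_liftable_zero_diag_sym3_swap_ac by simp
next
  assume "a = b + c" "b \<le> 0" "c \<le> 0"
  then show ?thesis
    by (intro pq_liftable_tree[of _ _ "\<lambda>i. [0, - a, - b] ! i"]) (auto simp: less_3_cases zero_diag_sym3_def)
next
  assume "b = a + c" "a \<le> 0" "c \<le> 0"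
  then show ?thesis
    by (intro pq_liftable_tree[of _ _ "\<lambda>i. [0, - a, - b] ! i"]) (auto simp: less_3_cases zero_diag_sym3_def)
next
  assume "c = a + b" "a \<le> 0" "b \<le> 0"
  then show ?thesis
    by (intro pq_liftable_tree[of _ _ "\<lambda>i. [0, - a, b] ! i"]) (auto simp: less_3_cases zero_diag_sym3_def)
qed

lemma sym_det3_val_cong: "\<forall>i<3. \<forall>j<3. A i j = B i j \<Longrightarrow> sym_det3_val A = sym_det3_val B"
  by (simp add: fun_eq_iff sym_det3_val_def)

lemma sym_det3_tie_shift:
  assumes "sym_det3_tie A"
  shows "sym_det3_tie (\<lambda>i j. A i j - x i - x j)"
proof -
  have W: "sym_det3_val (\<lambda>i j. A i j - x i - x j) k = sym_det3_val A k - 2 * (x 0 + x 1 + x 2)"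
    if "k < 5" for k
    using that unfolding less_5_cases sym_det3_val_def by (elim disjE) (simp_all add: algebra_simps)
  obtain p q where "p < 5" "q < 5" "p \<noteq> q" "sym_det3_val A p = sym_det3_val A q"
    "\<forall>r<5. sym_det3_val A p \<le> sym_det3_val A r"
    using assms unfolding sym_det3_tie_def by blast
  then show ?thesis
    unfolding sym_det3_tie_def using W by (intro exI[of _ p] exI[of _ q] conjI) simp_all
qed

lemma pq_liftable_if_sym_det3_tie:
  assumes sym: "\<forall>i<3. \<forall>j<3. A i j = A j i" and tie: "sym_det3_tie A"
  shows "pq_liftable 3 A"
proof -
  define N where "N i j = A i j - A i i / 2 - A j j / 2" for i j
  have "A 1 0 = A 0 1" "A 2 0 = A 0 2" "A 2 1 = A 1 2" using sym by simp_all
  then have N: "\<forall>i<3. \<forall>j<3. N i j = zero_diag_sym3 (N 0 1) (N 0 2) (N 1 2) i j"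
    by (simp add: less_3_cases zero_diag_sym3_def N_def)
  have "sym_det3_tie N" using sym_det3_tie_shift[OF tie] unfolding N_def by simp
  then have "sym_det3_tie (zero_diag_sym3 (N 0 1) (N 0 2) (N 1 2))"
    unfolding sym_det3_tie_def sym_det3_val_cong[OF N] .
  then have "pq_liftable 3 N"
    using pq_liftable_zero_diag_sym3_if_tie pq_liftable_cong N by blast
  then show ?thesis
    unfolding N_def by (rule pq_liftable_shift[where x = "\<lambda>i. A i i / 2"])
qed

lemma sym_kapranov_rank_3_le_2_iff:
  assumes sym: "\<forall>i<3. \<forall>j<3. A i j = A j i"
  shows "sym_kapranov_rank 3 A \<le> 2 \<longleftrightarrow> sym_trop_singular A {0, 1, 2} {0, 1, 2}"
  using sym_kapranov_rank_le_iff[OF sym] sym_trop_singular_3_iff[OF sym] sym_det3_tie_if_rank_2_lift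
    pq_liftable_if_sym_det3_tie[OF sym] rank_2_sym_lift_if_pq_liftable
  by blast

theorem corollary2:
  fixes A :: "nat \<Rightarrow> nat \<Rightarrow> real"
  assumes "\<forall>i<3. \<forall>j<3. A i j = A j i"
  shows "sym_kapranov_rank 3 A = 2 \<longleftrightarrow> sym_trop_rank 3 A = 2"
proof -
  have "sym_kapranov_rank 3 A = 2 \<longleftrightarrow> sym_kapranov_rank 3 A \<le> 2 \<and> \<not> sym_kapranov_rank 3 A \<le> 1"
    by linarith
  also have "\<dots> \<longleftrightarrow> sym_trop_singular A {0, 1, 2} {0, 1, 2} \<and> has_nonsingular_minor 3 A 2"
    using sym_kapranov_rank_3_le_2_iff[OF assms] sym_kapranov_rank_le_1_iff[OF assms]
    unfolding has_nonsingular_minor_def by blast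
  also have "\<dots> \<longleftrightarrow> sym_trop_rank 3 A = 2"
    using sym_trop_rank_3_eq_2_iff by blast
  finally show ?thesis .
qed

end
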